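(* Let $A\in\mathbb{C}^{m\times n}$ have rank $r>0$ with $\mathrm{rank}(A^{\sim}A)=\mathrm{rank}(A)$, and let $A=BC$ be a full rank factorization of $A$, where $B\in\mathbb{C}^{m\times r}$ and $C\in\mathbb{C}^{r\times n}$ both have rank $r$. Then $$A\{1,2,3^{\mathfrak{m}}\}=\left\{C_R^{-1}(B^{\sim}B)^{-1}B^{\sim} : C_R^{-1}\in\mathbb{C}^{n\times r} \text{ is a right inverse of } C\right\}.$$
   Context: For a positive integer $k$, the Minkowski metric matrix of order $k$ is $G_k=\mathrm{diag}(1,-I_{k-1})$ (with $G_1=(1)$). For $A\in\mathbb{C}^{m\times n}$, the Minkowski adjoint is $A^{\sim}=G_nA^*G_m$, where $A^*$ is the conjugate transpose. For $A\in\mathbb{C}^{m\times n}$ and $X\in\mathbb{C}^{n\times m}$ consider the equations $(1)\ AXA=A$, $(2)\ XAX=X$, $(3^{\mathfrak{m}})\ (AX)^{\sim}=AX$, $(4^{\mathfrak{m}})\ (XA)^{\sim}=XA$; $A\{i,\dots,k\}$ denotes the set of all $X$ satisfying the listed equations. A right inverse of $C$ is a matrix $C_R^{-1}$ with $CC_R^{-1}=I_r$. *)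

theory Defs
  imports "Jordan_Normal_Form.DL_Rank"
begin

definition minkowski_G :: "nat \<Rightarrow> complex mat" where
  "minkowski_G k = mat k k (\<lambda>(i,j). if i = j then (if i = 0 then 1 else -1) else 0)"

definition ctrans :: "complex mat \<Rightarrow> complex mat" where
  "ctrans A = mat (dim_col A) (dim_row A) (\<lambda>(i,j). cnj (A $$ (j,i)))"

definition mink_adj :: "complex mat \<Rightarrow> complex mat" where
  "mink_adj A = minkowski_G (dim_col A) * ctrans A * minkowski_G (dim_row A)"

definition mrank :: "complex mat \<Rightarrow> nat" where
  "mrank A = vec_space.rank (dim_row A) A"

text \<open>Inverse of a square matrix (meaningful when it is invertible).\<close>
definition minv :: "complex mat \<Rightarrow> complex mat" where
  "minv M = (THE X. X \<in> carrier_mat (dim_row M) (dim_row M) \<and>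
                    M * X = 1\<^sub>m (dim_row M) \<and> X * M = 1\<^sub>m (dim_row M))"

definition mink_inv_123 :: "complex mat \<Rightarrow> complex mat set" where
  "mink_inv_123 A = {X \<in> carrier_mat (dim_col A) (dim_row A).
      A * X * A = A \<and> X * A * X = X \<and> mink_adj (A * X) = A * X}"

end

theory Submission
  imports Defs
begin

(* The Minkowski Gram matrix B~B is invertible: a vector in its kernel would lie in the kernel
   of C~(B~B), so rank (A~A) = rank (C~(B~B) C) < r.  Hence L = (B~B)^-1 B~ is a left inverse
   of B for which BL is Minkowski-selfadjoint, and C_R L satisfies (1), (2) and (3^m) for every
   right inverse C_R of C.  Conversely, for X in A{1,2,3^m} the r x r matrix CXB is idempotent
   and fixes C, so it has rank r and equals I.  Then CX is a left inverse of B with B(CX) = AX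
   selfadjoint, which forces CX = L, and X = XAX = (XB) L where XB is a right inverse of C. *)

lemma assoc_mult_mat_dims:
  "dim_col A = dim_row B \<Longrightarrow> dim_col B = dim_row C \<Longrightarrow> A * B * C = A * (B * C)"
  by (rule assoc_mult_mat[of A "dim_row A" "dim_col A" B "dim_col B" C "dim_col C"]) auto

lemma minkowski_G_carrier[simp]: "minkowski_G k \<in> carrier_mat k k"
  unfolding minkowski_G_def by auto

lemma minkowski_G_dims[simp]: "dim_row (minkowski_G k) = k" "dim_col (minkowski_G k) = k"
  unfolding minkowski_G_def by auto

lemma minkowski_G_square: "minkowski_G k * minkowski_G k = 1\<^sub>m k"
proof (rule eq_matI)
  fix i j assume "i < dim_row (1\<^sub>m k)" "j < dim_col (1\<^sub>m k)"
  then have i: "i < k" and j: "j < k" by auto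
  have "(minkowski_G k * minkowski_G k) $$ (i,j) =
     (\<Sum>l\<in>{0..<k}. (if i = l then (if i = 0 then 1 else -1) else 0) *
                   (if l = j then (if l = 0 then 1 else -1) else 0))"
    using i j unfolding minkowski_G_def by (simp add: scalar_prod_def)
  also have "\<dots> = (\<Sum>l\<in>{0..<k}. if l = i then (if i = j then 1 else 0) else 0)"
    by (rule sum.cong) auto
  also have "\<dots> = (1\<^sub>m k) $$ (i,j)" using i j by simp
  finally show "(minkowski_G k * minkowski_G k) $$ (i,j) = (1\<^sub>m k) $$ (i,j)" .
qed auto

lemma ctrans_carrier[simp]: "A \<in> carrier_mat m n \<Longrightarrow> ctrans A \<in> carrier_mat n m"
  unfolding ctrans_def by auto

lemma ctrans_dims[simp]: "dim_row (ctrans A) = dim_col A" "dim_col (ctrans A) = dim_row A"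
  unfolding ctrans_def by auto

lemma ctrans_index[simp]:
  "i < dim_col A \<Longrightarrow> j < dim_row A \<Longrightarrow> ctrans A $$ (i,j) = cnj (A $$ (j,i))"
  unfolding ctrans_def by auto

lemma ctrans_ctrans[simp]: "ctrans (ctrans A) = A"
  by (rule eq_matI) auto

lemma ctrans_minkowski_G[simp]: "ctrans (minkowski_G k) = minkowski_G k"
  by (rule eq_matI) (auto simp: minkowski_G_def)

lemma ctrans_one[simp]: "ctrans (1\<^sub>m k) = 1\<^sub>m k"
  by (rule eq_matI) auto

lemma ctrans_mult:
  assumes "A \<in> carrier_mat m k" "B \<in> carrier_mat k n"
  shows "ctrans (A * B) = ctrans B * ctrans A"
proof (rule eq_matI)
  fix i j assume "i < dim_row (ctrans B * ctrans A)" "j < dim_col (ctrans B * ctrans A)"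
  then show "ctrans (A * B) $$ (i, j) = (ctrans B * ctrans A) $$ (i, j)"
    using assms by (simp add: scalar_prod_def mult.commute)
qed (use assms in auto)

lemma mink_adj_dims[simp]: "dim_row (mink_adj A) = dim_col A" "dim_col (mink_adj A) = dim_row A"
  unfolding mink_adj_def by simp_all

lemma mink_adj_carrier[simp]: "A \<in> carrier_mat m n \<Longrightarrow> mink_adj A \<in> carrier_mat n m"
  unfolding carrier_mat_def by simp

lemma mink_adj_one[simp]: "mink_adj (1\<^sub>m k) = 1\<^sub>m k"
  unfolding mink_adj_def by (simp add: minkowski_G_square)

lemma mink_adj_mult:
  assumes A: "A \<in> carrier_mat m k" and B: "B \<in> carrier_mat k n"
  shows "mink_adj (A * B) = mink_adj B * mink_adj A"
proof -
  let ?Gn = "minkowski_G n" and ?Gm = "minkowski_G m" and ?Gk = "minkowski_G k"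
  have "mink_adj B * mink_adj A = (?Gn * ctrans B * ?Gk) * (?Gk * ctrans A * ?Gm)"
    unfolding mink_adj_def using A B by simp
  also have "\<dots> = ?Gn * ctrans B * (?Gk * ?Gk) * ctrans A * ?Gm"
    using A B by (simp add: assoc_mult_mat_dims)
  also have "\<dots> = ?Gn * (ctrans B * ctrans A) * ?Gm"
    unfolding minkowski_G_square using A B by (simp add: assoc_mult_mat_dims)
  also have "\<dots> = mink_adj (A * B)"
    unfolding mink_adj_def using A B by (simp add: ctrans_mult)
  finally show ?thesis by simp
qed

lemma mink_adj_mink_adj[simp]:
  assumes A: "A \<in> carrier_mat m n"
  shows "mink_adj (mink_adj A) = A"
proof -
  let ?Gn = "minkowski_G n" and ?Gm = "minkowski_G m"
  have GA: "?Gn * ctrans A \<in> carrier_mat n m" 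
    using A by (meson ctrans_carrier minkowski_G_carrier mult_carrier_mat)
  have "ctrans (?Gn * ctrans A * ?Gm) = ?Gm * ctrans (?Gn * ctrans A)"
    using ctrans_mult[OF GA minkowski_G_carrier] by simp
  also have "ctrans (?Gn * ctrans A) = A * ?Gn"
    using A ctrans_mult[of ?Gn n n "ctrans A" m] by simp
  finally have "ctrans (?Gn * ctrans A * ?Gm) = ?Gm * A * ?Gn"
    using A by (simp add: assoc_mult_mat_dims)
  then have "mink_adj (mink_adj A) = (?Gm * ?Gm) * A * (?Gn * ?Gn)"
    using A by (simp add: mink_adj_def assoc_mult_mat_dims)
  then show ?thesis unfolding minkowski_G_square using A by simp
qed

lemma (in vec_space) rank_mult_le_left:
  assumes X: "X \<in> carrier_mat n k" and Y: "Y \<in> carrier_mat k p"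
  shows "rank (X * Y) \<le> rank X"
proof -
  have XY: "X * Y \<in> carrier_mat n p" using X Y by auto
  let ?W = "span (set (cols X))"
  let ?U = "span (set (cols (X * Y)))"
  have "col_space (X * Y) \<subseteq> col_space X"
  proof
    fix y assume "y \<in> col_space (X * Y)"
    then obtain x where x: "x \<in> carrier_vec p" "y = (X * Y) *\<^sub>v x"
      using col_space_eq[OF XY] XY by auto
    then have "y = X *\<^sub>v (Y *\<^sub>v x)" using X Y by (simp add: assoc_mult_mat_vec)
    moreover have "Y *\<^sub>v x \<in> carrier_vec (dim_col X)" using X Y x by auto
    ultimately show "y \<in> col_space X" using col_space_eq[OF X] X by auto
  qed
  then have sub: "?U \<subseteq> ?W" unfolding col_space_def .
  have sW: "subspace class_ring ?W V" using span_is_subspace X cols_dim by blast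
  have sU: "subspace class_ring ?U V" using span_is_subspace XY cols_dim by blast
  have "vectorspace.dim class_ring ((vs ?W)\<lparr>carrier := ?U\<rparr>) \<le> vectorspace.dim class_ring (vs ?W)"
    using vectorspace.subspace_dim[OF subspace_is_vs[OF sW] nested_subspaces[OF sW sU sub]
        fin_dim_span_cols[OF X]] fin_dim_span_cols[OF XY]
    by simp
  then show ?thesis unfolding rank_def by simp
qed

lemma (in vec_space) nontrivial_kernel_low_rank:
  assumes A: "A \<in> carrier_mat n nc"
    and v: "v \<in> carrier_vec nc" "v \<noteq> 0\<^sub>v nc" "A *\<^sub>v v = 0\<^sub>v n"
  shows "rank A < nc"
proof -
  obtain S where S: "maximal S (\<lambda>T. T \<subseteq> set (cols A) \<and> lin_indpt T)"
    using maximal_exists[of "(\<lambda>T. T \<subseteq> set (cols A) \<and> lin_indpt T)" "card (set (cols A))" "{}"]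
    by (meson List.finite_set card_mono empty_iff empty_subsetI finite_lin_indpt2 rev_finite_subset)
  have rank: "rank A = card S" using rank_card_indpt[OF A S] .
  have S_indpt: "S \<subseteq> set (cols A)" "lin_indpt S" using S unfolding maximal_def by auto
  have cols_card: "card (set (cols A)) \<le> nc"
    using A by (metis card_length cols_length carrier_matD(2))
  show ?thesis
  proof (cases "distinct (cols A)")
    case True
    then have "S \<noteq> set (cols A)" using lin_depI[OF A v] S_indpt by auto
    then have "card S < card (set (cols A))" using S_indpt by (simp add: psubset_card_mono)
    then show ?thesis using rank cols_card by linarith
  next
    case False
    then have "card (set (cols A)) < nc"
      using A by (metis card_distinct card_length cols_length carrier_matD(2) le_neq_implies_less)
    moreover have "card S \<le> card (set (cols A))" using S_indpt by (simp add: card_mono)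
    ultimately show ?thesis using rank by linarith
  qed
qed

lemma idempotent_full_rank_eq_one:
  fixes N :: "'a :: field mat"
  assumes N: "N \<in> carrier_mat r r" and idem: "N * N = N" and rank: "vec_space.rank r N = r"
  shows "N = 1\<^sub>m r"
proof -
  have "det N \<noteq> 0" using vec_space.det_rank_iff[OF N] rank by simp
  then have "N \<in> Units (ring_mat TYPE('a) r r)" using det_non_zero_imp_unit[OF N] by simp
  then obtain Ni where Ni: "Ni \<in> carrier_mat r r" "Ni * N = 1\<^sub>m r"
    unfolding Units_def ring_mat_def by auto
  have "N = (Ni * N) * N" using Ni N by simp
  also have "\<dots> = Ni * (N * N)" using assoc_mult_mat[OF Ni(1) N N] .
  also have "\<dots> = 1\<^sub>m r" using idem Ni by simp
  finally show ?thesis .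
qed

lemma minv_eqI:
  assumes M: "M \<in> carrier_mat k k" and Mi: "Mi \<in> carrier_mat k k"
    and "M * Mi = 1\<^sub>m k" "Mi * M = 1\<^sub>m k"
  shows "minv M = Mi"
  unfolding minv_def
proof (rule the_equality)
  fix X assume "X \<in> carrier_mat (dim_row M) (dim_row M) \<and>
    M * X = 1\<^sub>m (dim_row M) \<and> X * M = 1\<^sub>m (dim_row M)"
  then have X: "X \<in> carrier_mat k k" "X * M = 1\<^sub>m k" using M by auto
  have "X = X * (M * Mi)" using assms X by simp
  also have "\<dots> = (X * M) * Mi" using assoc_mult_mat[OF X(1) M Mi] by (rule sym)
  finally show "X = Mi" using X Mi by simp
qed (use assms in auto)

lemma minv_correct:
  assumes M: "M \<in> carrier_mat k k" and "det M \<noteq> 0"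
  shows "minv M \<in> carrier_mat k k" "M * minv M = 1\<^sub>m k" "minv M * M = 1\<^sub>m k"
proof -
  have "M \<in> Units (ring_mat TYPE(complex) k k)" using det_non_zero_imp_unit[OF assms] .
  then obtain Mi where "Mi \<in> carrier_mat k k" "M * Mi = 1\<^sub>m k" "Mi * M = 1\<^sub>m k"
    unfolding Units_def ring_mat_def by auto
  with minv_eqI[OF M this(1)] show "minv M \<in> carrier_mat k k" "M * minv M = 1\<^sub>m k" "minv M * M = 1\<^sub>m k"
    by simp_all
qed

lemma mink_adj_minv:
  assumes M: "M \<in> carrier_mat k k" and "det M \<noteq> 0" and self_adj: "mink_adj M = M"
  shows "mink_adj (minv M) = minv M"
proof -
  note Mi = minv_correct[OF assms(1,2)]
  have "M * mink_adj (minv M) = mink_adj (minv M * M)"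
    using mink_adj_mult[OF Mi(1) M] self_adj by simp
  moreover have "mink_adj (minv M) * M = mink_adj (M * minv M)"
    using mink_adj_mult[OF M Mi(1)] self_adj by simp
  ultimately have "M * mink_adj (minv M) = 1\<^sub>m k" "mink_adj (minv M) * M = 1\<^sub>m k"
    using Mi(2,3) by simp_all
  then show ?thesis using minv_eqI[OF M mink_adj_carrier[OF Mi(1)]] by simp
qed

lemma mink_adj_gram_factor:
  assumes B: "B \<in> carrier_mat m r" and C: "C \<in> carrier_mat r n"
  shows "mink_adj (B * C) * (B * C) = mink_adj C * (mink_adj B * B) * C"
proof -
  have "mink_adj (B * C) = mink_adj C * mink_adj B" using mink_adj_mult[OF B C] .
  then show ?thesis using B C by (simp add: assoc_mult_mat_dims carrier_matD)
qed

lemma det_mink_gram_nonzero: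
  assumes B: "B \<in> carrier_mat m r" and C: "C \<in> carrier_mat r n"
    and rank: "mrank (mink_adj (B * C) * (B * C)) = r"
  shows "det (mink_adj B * B) \<noteq> 0"
proof
  let ?M = "mink_adj B * B"
  assume "det ?M = 0"
  have M: "?M \<in> carrier_mat r r" using mult_carrier_mat[OF mink_adj_carrier[OF B] B] .
  obtain y where y: "y \<in> carrier_vec r" "y \<noteq> 0\<^sub>v r" "?M *\<^sub>v y = 0\<^sub>v r"
    using det_0_iff_vec_prod_zero_field[OF M] \<open>det ?M = 0\<close> by auto
  have CM: "mink_adj C * ?M \<in> carrier_mat n r" using mult_carrier_mat[OF mink_adj_carrier[OF C] M] .
  have "(mink_adj C * ?M) *\<^sub>v y = mink_adj C *\<^sub>v (?M *\<^sub>v y)"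
    using assoc_mult_mat_vec[OF mink_adj_carrier[OF C] M y(1)] .
  also have "\<dots> = 0\<^sub>v n" unfolding y(3) using C by (intro eq_vecI) (auto simp: scalar_prod_def)
  finally have "vec_space.rank n (mink_adj C * ?M) < r"
    using vec_space.nontrivial_kernel_low_rank[OF CM y(1,2)] by simp
  moreover have "vec_space.rank n (mink_adj C * ?M * C) \<le> vec_space.rank n (mink_adj C * ?M)"
    using vec_space.rank_mult_le_left[OF CM C] .
  moreover have "vec_space.rank n (mink_adj C * ?M * C) = r"
    using rank C unfolding mrank_def mink_adj_gram_factor[OF B C] by simp
  ultimately show False by simp
qed

definition mink_left_inv :: "complex mat \<Rightarrow> complex mat" where
  "mink_left_inv B = minv (mink_adj B * B) * mink_adj B"

lemma mink_left_inv_correct: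
  assumes B: "B \<in> carrier_mat m r" and det: "det (mink_adj B * B) \<noteq> 0"
  shows "mink_left_inv B \<in> carrier_mat r m"
    and "mink_left_inv B * B = 1\<^sub>m r"
    and "mink_adj (B * mink_left_inv B) = B * mink_left_inv B"
proof -
  let ?M = "mink_adj B * B"
  have M: "?M \<in> carrier_mat r r" using mult_carrier_mat[OF mink_adj_carrier[OF B] B] .
  note Mi = minv_correct[OF M det]
  have "mink_adj ?M = ?M" using mink_adj_mult[OF mink_adj_carrier[OF B] B] B by simp
  then have Mi_adj: "mink_adj (minv ?M) = minv ?M" using mink_adj_minv[OF M det] by simp
  have L: "minv ?M * mink_adj B \<in> carrier_mat r m" using mult_carrier_mat[OF Mi(1)] B by simp
  then show "mink_left_inv B \<in> carrier_mat r m" unfolding mink_left_inv_def .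
  show "mink_left_inv B * B = 1\<^sub>m r"
    unfolding mink_left_inv_def using Mi B by (simp add: assoc_mult_mat_dims carrier_matD)
  have "mink_adj (B * (minv ?M * mink_adj B)) = mink_adj (minv ?M * mink_adj B) * mink_adj B"
    using mink_adj_mult[OF B L] .
  also have "mink_adj (minv ?M * mink_adj B) = B * minv ?M"
    using mink_adj_mult[OF Mi(1) mink_adj_carrier[OF B]] Mi_adj B by simp
  finally show "mink_adj (B * mink_left_inv B) = B * mink_left_inv B"
    unfolding mink_left_inv_def using Mi(1) B by (simp add: assoc_mult_mat_dims carrier_matD)
qed

lemma mink_left_inv_unique:
  assumes B: "B \<in> carrier_mat m r" and det: "det (mink_adj B * B) \<noteq> 0"
    and Y: "Y \<in> carrier_mat r m" and YB: "Y * B = 1\<^sub>m r"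
    and self_adj: "mink_adj (B * Y) = B * Y"
  shows "Y = mink_left_inv B"
proof -
  let ?M = "mink_adj B * B"
  have M: "?M \<in> carrier_mat r r" using mult_carrier_mat[OF mink_adj_carrier[OF B] B] .
  note Mi = minv_correct[OF M det]
  have BY_adj: "mink_adj B * mink_adj Y = 1\<^sub>m r" using mink_adj_mult[OF Y B] YB by simp
  have "mink_adj B = (mink_adj B * mink_adj Y) * mink_adj B" using BY_adj B by simp
  also have "\<dots> = mink_adj B * mink_adj (B * Y)"
    using B Y by (simp add: mink_adj_mult assoc_mult_mat_dims carrier_matD)
  also have "\<dots> = ?M * Y" using self_adj B Y by (simp add: assoc_mult_mat_dims carrier_matD)
  finally have "minv ?M * mink_adj B = (minv ?M * ?M) * Y"
    using Mi(1) B Y by (simp add: assoc_mult_mat_dims carrier_matD)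
  then show ?thesis unfolding mink_left_inv_def using Mi(3) Y by simp
qed

lemma mink_inv_123_of_right_inverse:
  assumes B: "B \<in> carrier_mat m r" and C: "C \<in> carrier_mat r n"
    and L: "L \<in> carrier_mat r m" and LB: "L * B = 1\<^sub>m r" and BL_adj: "mink_adj (B * L) = B * L"
    and R: "R \<in> carrier_mat n r" and CR: "C * R = 1\<^sub>m r"
  shows "R * L \<in> mink_inv_123 (B * C)"
proof -
  have "B * C * (R * L) = B * ((C * R) * L)"
    using B C R L by (simp add: assoc_mult_mat_dims carrier_matD)
  then have AX: "B * C * (R * L) = B * L" using CR L by simp
  have "B * C * (R * L) * (B * C) = B * ((L * B) * C)"
    unfolding AX using B C L by (simp add: assoc_mult_mat_dims carrier_matD)
  then have AXA: "B * C * (R * L) * (B * C) = B * C" using LB C by simp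
  have "R * L * (B * C) * (R * L) = R * (L * (B * C * (R * L)))"
    using B C R L by (simp add: assoc_mult_mat_dims carrier_matD)
  also have "\<dots> = R * ((L * B) * L)"
    unfolding AX using B R L by (simp add: assoc_mult_mat_dims carrier_matD)
  finally have XAX: "R * L * (B * C) * (R * L) = R * L" using LB L by simp
  show ?thesis
    unfolding mink_inv_123_def using AXA XAX AX BL_adj B C R L by simp
qed

lemma full_rank_factorization_inner_eq_one:
  assumes B: "B \<in> carrier_mat m r" and C: "C \<in> carrier_mat r n"
    and L: "L \<in> carrier_mat r m" and LB: "L * B = 1\<^sub>m r" and rank: "vec_space.rank r C = r"
    and X: "X \<in> carrier_mat n m"
    and AXA: "B * C * X * (B * C) = B * C" and XAX: "X * (B * C) * X = X"
  shows "C * X * B = 1\<^sub>m r"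
proof -
  let ?N = "C * X * B"
  have N: "?N \<in> carrier_mat r r" using B C X by simp
  have "?N * C = (L * B) * (?N * C)" using LB N C by simp
  also have "\<dots> = L * (B * C * X * (B * C))"
    using B C X L by (simp add: assoc_mult_mat_dims carrier_matD)
  also have "\<dots> = (L * B) * C" unfolding AXA using B C L by (simp add: assoc_mult_mat_dims carrier_matD)
  finally have NC: "?N * C = C" using LB C by simp
  have "?N * ?N = C * (X * (B * C) * X) * B"
    using B C X by (simp add: assoc_mult_mat_dims carrier_matD)
  then have idem: "?N * ?N = ?N" unfolding XAX .
  have "r \<le> vec_space.rank r ?N"
    using vec_space.rank_mult_le_left[OF N C] rank unfolding NC by simp
  then have "vec_space.rank r ?N = r" using vec_space.rank_le_nc[OF N] by simp
  then show ?thesis using idempotent_full_rank_eq_one[OF N idem] by simp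
qed

lemma mink_inv_123_full_rank_factorization:
  assumes B: "B \<in> carrier_mat m r" and C: "C \<in> carrier_mat r n"
    and rank: "vec_space.rank r C = r" and det: "det (mink_adj B * B) \<noteq> 0"
  shows "mink_inv_123 (B * C) = {R * mink_left_inv B | R. R \<in> carrier_mat n r \<and> C * R = 1\<^sub>m r}"
proof (intro equalityI subsetI)
  note L = mink_left_inv_correct[OF B det]
  fix X assume "X \<in> mink_inv_123 (B * C)"
  then have X: "X \<in> carrier_mat n m" and AXA: "B * C * X * (B * C) = B * C"
    and XAX: "X * (B * C) * X = X" and AX_adj: "mink_adj (B * C * X) = B * C * X"
    unfolding mink_inv_123_def using B C by auto
  have CXB: "C * X * B = 1\<^sub>m r"
    using full_rank_factorization_inner_eq_one[OF B C L(1,2) rank X AXA XAX] .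
  have CX_carrier: "C * X \<in> carrier_mat r m" using C X by simp
  have "B * C * X = B * (C * X)" using B C X by (simp add: assoc_mult_mat_dims carrier_matD)
  moreover have "C * X * B = 1\<^sub>m r" using CXB .
  ultimately have CX: "C * X = mink_left_inv B"
    using mink_left_inv_unique[OF B det CX_carrier] AX_adj by simp
  have "X = X * B * (C * X)" using XAX B C X by (simp add: assoc_mult_mat_dims carrier_matD)
  then have "X = X * B * mink_left_inv B" unfolding CX .
  moreover have "C * (X * B) = 1\<^sub>m r" using CXB B C X by (simp add: assoc_mult_mat_dims carrier_matD)
  moreover have "X * B \<in> carrier_mat n r" using X B by simp
  ultimately show "X \<in> {R * mink_left_inv B | R. R \<in> carrier_mat n r \<and> C * R = 1\<^sub>m r}"
    by blast
next
  fix X assume "X \<in> {R * mink_left_inv B | R. R \<in> carrier_mat n r \<and> C * R = 1\<^sub>m r}"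
  then show "X \<in> mink_inv_123 (B * C)"
    using mink_inv_123_of_right_inverse[OF B C mink_left_inv_correct[OF B det]] by blast
qed

theorem theorem4p4:
  fixes A B C :: "complex mat" and m n r :: nat
  assumes "A \<in> carrier_mat m n" and "B \<in> carrier_mat m r" and "C \<in> carrier_mat r n"
    and "r > 0" and "mrank A = r" and "mrank B = r" and "mrank C = r"
    and "A = B * C"
    and "mrank (mink_adj A * A) = mrank A"
  shows "mink_inv_123 A =
    {CR * minv (mink_adj B * B) * mink_adj B | CR. CR \<in> carrier_mat n r \<and> C * CR = 1\<^sub>m r}"
proof -
  note B = assms(2) and C = assms(3)
  have det: "det (mink_adj B * B) \<noteq> 0"
    using det_mink_gram_nonzero[OF B C] assms(5,8,9) by simp
  have rank_C: "vec_space.rank r C = r" using assms(7) C unfolding mrank_def by simp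
  have "mink_inv_123 A = {CR * mink_left_inv B | CR. CR \<in> carrier_mat n r \<and> C * CR = 1\<^sub>m r}"
    using mink_inv_123_full_rank_factorization[OF B C rank_C det] assms(8) by simp
  moreover have "CR * mink_left_inv B = CR * minv (mink_adj B * B) * mink_adj B"
    if "CR \<in> carrier_mat n r" for CR
    using that minv_correct(1)[OF mult_carrier_mat[OF mink_adj_carrier[OF B] B] det] B
    unfolding mink_left_inv_def by (simp add: assoc_mult_mat_dims carrier_matD)
  ultimately show ?thesis by auto
qed

end
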